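(* Let $T$ be a CPTP map on $\mathfrak{H}(\mathcal{H})$, $\mathcal{H}=\mathcal{H}_S\oplus\mathcal{H}_R$ orthogonal, with $\mathcal{H}_S=\bigoplus_{i=1}^K\mathcal{H}_{S_i}$ an orthogonal decomposition into invariant subspaces, and assume moreover that $\mathcal{H}_S$ is GAS. Then $\mathrm{id}-T_R$ is invertible on $\mathfrak{H}_R$ and for every density operator $\rho$ and every $i$, $$\lim_{n\to\infty}\mathrm{Tr}(\Pi_{S_i}T^n(\rho))=\mathrm{Tr}(\Pi_{S_i}\rho_S)+\mathrm{Tr}\big(\Pi_{S_i}\,T_{SR}\big((\mathrm{id}-T_R)^{-1}(\rho_R)\big)\big),$$ where $\rho_S=\Pi_S\rho\Pi_S$ and $\rho_R=\Pi_R\rho\Pi_R$.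
   Context: $\mathcal{H}$ is a finite-dimensional complex Hilbert space; $T$ is CPTP: $T(\rho)=\sum_kM_k\rho M_k^\dagger$, $\sum_kM_k^\dagger M_k=I$. A subspace is invariant for $T$ if every PSD $\rho$ supported in it is mapped to an operator supported in it. $\Pi_S,\Pi_R,\Pi_{S_i}$ are the orthogonal projections onto $\mathcal{H}_S,\mathcal{H}_R,\mathcal{H}_{S_i}$. An invariant $\mathcal{H}_S$ is GAS if $\lim_n\|T^n(\rho)-\Pi_ST^n(\rho)\Pi_S\|=0$ for every density operator $\rho$. $\mathfrak{H}_R$ denotes the Hermitian operators $A$ with $A=\Pi_RA\Pi_R$; $T_R:\mathfrak{H}_R\to\mathfrak{H}_R$, $T_R(A)=\Pi_RT(A)\Pi_R$; $T_{SR}:\mathfrak{H}_R\to$ (Hermitian operators supported on $\mathcal{H}_S$), $T_{SR}(A)=\Pi_ST(A)\Pi_S$. *)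

theory Defs
  imports "HOL-Analysis.Analysis"
begin

type_synonym 'n cmat = "complex^'n^'n"

definition madj :: "'n::finite cmat \<Rightarrow> 'n cmat" where
  "madj A = (\<chi> i j. cnj (A $ j $ i))"

definition hermitian :: "'n::finite cmat \<Rightarrow> bool" where
  "hermitian A \<longleftrightarrow> madj A = A"

definition cinner :: "complex^'n::finite \<Rightarrow> complex^'n \<Rightarrow> complex" where
  "cinner v w = (\<Sum>i\<in>UNIV. cnj (v $ i) * w $ i)"

definition psd :: "'n::finite cmat \<Rightarrow> bool" where
  "psd A \<longleftrightarrow> hermitian A \<and> (\<forall>v. 0 \<le> Re (cinner v (A *v v)))"

definition density :: "'n::finite cmat \<Rightarrow> bool" where
  "density \<rho> \<longleftrightarrow> psd \<rho> \<and> trace \<rho> = 1"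

definition cptp :: "('n::finite cmat \<Rightarrow> 'n cmat) \<Rightarrow> bool" where
  "cptp T \<longleftrightarrow> (\<exists>Ms :: 'n cmat list.
      T = (\<lambda>\<rho>. \<Sum>M\<leftarrow>Ms. M ** \<rho> ** madj M) \<and>
      (\<Sum>M\<leftarrow>Ms. madj M ** M) = mat 1)"

text \<open>Subspaces are represented by their orthogonal projections.\<close>
definition orth_proj :: "'n::finite cmat \<Rightarrow> bool" where
  "orth_proj P \<longleftrightarrow> P ** P = P \<and> madj P = P"

definition supported_in :: "'n::finite cmat \<Rightarrow> 'n cmat \<Rightarrow> bool" where
  "supported_in P A \<longleftrightarrow> P ** A ** P = A"

definition invariant :: "('n::finite cmat \<Rightarrow> 'n cmat) \<Rightarrow> 'n cmat \<Rightarrow> bool" where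
  "invariant T P \<longleftrightarrow> (\<forall>\<rho>. psd \<rho> \<and> supported_in P \<rho> \<longrightarrow> supported_in P (T \<rho>))"

definition GAS :: "('n::finite cmat \<Rightarrow> 'n cmat) \<Rightarrow> 'n cmat \<Rightarrow> bool" where
  "GAS T P \<longleftrightarrow> invariant T P \<and>
     (\<forall>\<rho>. density \<rho> \<longrightarrow> (\<lambda>n. norm ((T^^n) \<rho> - P ** (T^^n) \<rho> ** P)) \<longlonglongrightarrow> 0)"

definition herm_on :: "'n::finite cmat \<Rightarrow> 'n cmat set" where
  "herm_on P = {A. hermitian A \<and> A = P ** A ** P}"

definition T_R :: "('n::finite cmat \<Rightarrow> 'n cmat) \<Rightarrow> 'n cmat \<Rightarrow> 'n cmat \<Rightarrow> 'n cmat" where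
  "T_R T PR A = PR ** T A ** PR"

definition T_SR :: "('n::finite cmat \<Rightarrow> 'n cmat) \<Rightarrow> 'n cmat \<Rightarrow> 'n cmat \<Rightarrow> 'n cmat" where
  "T_SR T PS A = PS ** T A ** PS"

end

theory Submission
  imports Defs
begin

(*
  Write T(X) = \<Sum> M X M* in Kraus form.  The argument has four ingredients.
  (1) Invariance of the range of an orthogonal projection P forces every Kraus operator
      to satisfy M P = P M P.  Applied to H_S this gives  \<Pi>_R T(X) \<Pi>_R = T_R(\<Pi>_R X \<Pi>_R),
      hence  T_R^n(\<Pi>_R X \<Pi>_R) = \<Pi>_R T^n(X) \<Pi>_R.
  (2) Density operators span all matrices over \<complex>, so the GAS limit extends to every X;
      therefore T_R^n B \<rightarrow> 0 for every B supported on H_R.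
  (3) Consequently T_R has no nonzero fixed point in Herm(H_R), so the linear map id - T_R
      is injective on the finite-dimensional space Herm(H_R) and hence bijective.
  (4) For a block \<Pi>_{S_i} of the decomposition, the dual map satisfies
      T*(\<Pi>_{S_i}) = \<Pi>_{S_i} + \<Pi>_R T*(\<Pi>_{S_i}) \<Pi>_R, so Tr(\<Pi>_{S_i} T^n \<rho>) plus
      Tr(\<Pi>_{S_i} T(T_R^n B)) is constant in n when (id - T_R) B = \<rho>_R; letting n \<rightarrow> \<infinity>
      yields the absorption formula.
*)

section \<open>Complex scalars, adjoints and complex-linear maps on matrices\<close>

text \<open>Matrices over \<complex> form only a real vector space in the library; complex scaling
  has to be introduced by hand.\<close>
definition cscale :: "complex \<Rightarrow> 'n::finite cmat \<Rightarrow> 'n cmat" where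
  "cscale c A = (\<chi> i j. c * A$i$j)"

lemma cscale_mult_left: "cscale c A ** B = cscale c (A ** B)"
  by (simp add: cscale_def matrix_matrix_mult_def vec_eq_iff sum_distrib_left mult.assoc)

lemma cscale_mult_right: "A ** cscale c B = cscale c (A ** B)"
  by (simp add: cscale_def matrix_matrix_mult_def vec_eq_iff sum_distrib_left algebra_simps)

lemma scaleR_cscale: "r *\<^sub>R (A::'n::finite cmat) = cscale (complex_of_real r) A"
  by (simp add: cscale_def vec_eq_iff) (simp add: scaleR_conv_of_real)

lemma cscale_add: "cscale c (A + B) = cscale c A + cscale c B"
  by (simp add: cscale_def vec_eq_iff algebra_simps)

lemma cscale_minus_one: "cscale (-1) A = - A"
  by (simp add: cscale_def vec_eq_iff)

lemma cscale_one: "cscale 1 A = A"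
  by (simp add: cscale_def vec_eq_iff)

lemma cscale_cscale: "cscale c (cscale d A) = cscale (c * d) A"
  by (simp add: cscale_def vec_eq_iff)

lemma cscale_sum_list: "cscale c (\<Sum>x\<leftarrow>xs. B x) = (\<Sum>x\<leftarrow>xs. cscale c (B x))"
  by (induct xs) (simp_all add: cscale_add, simp add: cscale_def vec_eq_iff)

lemma cscale_mulv: "cscale c A *v w = c *s (A *v w)"
  by (simp add: cscale_def matrix_vector_mult_def vec_eq_iff sum_distrib_left mult.assoc)

lemma trace_cscale: "trace (cscale c A) = c * trace A"
  by (simp add: trace_def cscale_def sum_distrib_left)

lemma madj_mult: "madj (A ** B) = madj B ** madj (A::'n::finite cmat)"
  by (simp add: madj_def matrix_matrix_mult_def vec_eq_iff mult.commute)

lemma madj_madj: "madj (madj A) = A"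
  by (simp add: madj_def vec_eq_iff)

lemma madj_zero: "madj 0 = 0"
  by (simp add: madj_def vec_eq_iff)

lemma madj_diff: "madj (A - B) = madj A - madj B"
  by (simp add: madj_def vec_eq_iff)

lemma madj_one: "madj (mat 1) = mat 1"
  by (simp add: madj_def mat_def vec_eq_iff)

lemma madj_add: "madj (A + B) = madj A + madj B"
  by (simp add: madj_def vec_eq_iff)

lemma madj_cscale: "madj (cscale c A) = cscale (cnj c) (madj A)"
  by (simp add: madj_def cscale_def vec_eq_iff)

lemma madj_sum_list: "madj (\<Sum>x\<leftarrow>xs. B x :: 'n::finite cmat) = (\<Sum>x\<leftarrow>xs. madj (B x))"
  by (induct xs) (auto simp: madj_add madj_def vec_eq_iff)

lemma matrix_add_rdistrib: "((B::'n::finite cmat) + C) ** A = B ** A + C ** A"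
  by (simp add: matrix_matrix_mult_def vec_eq_iff algebra_simps sum.distrib)

lemma matrix_diff_ldistrib: "(A::'n::finite cmat) ** (B - C) = A ** B - A ** C"
  by (simp add: matrix_matrix_mult_def vec_eq_iff algebra_simps sum_subtractf)

lemma matrix_diff_rdistrib: "((B::'n::finite cmat) - C) ** A = B ** A - C ** A"
  by (simp add: matrix_matrix_mult_def vec_eq_iff algebra_simps sum_subtractf)

lemma matrix_sum_ldistrib:
  "finite I \<Longrightarrow> (A::complex^'n::finite^'m::finite) ** (\<Sum>i\<in>I. B i) = (\<Sum>i\<in>I. A ** B i)"
  by (induct I rule: finite_induct) (auto simp: matrix_add_ldistrib)

lemma matrix_sum_list_ldistrib:
  "(A::'n::finite cmat) ** (\<Sum>x\<leftarrow>xs. B x) = (\<Sum>x\<leftarrow>xs. A ** B x)"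
  by (induct xs) (auto simp: matrix_add_ldistrib)

lemma matrix_sum_list_rdistrib:
  "(\<Sum>x\<leftarrow>xs. B x :: 'n::finite cmat) ** A = (\<Sum>x\<leftarrow>xs. B x ** A)"
  by (induct xs) (simp_all add: matrix_add_rdistrib)

lemma trace_sum_list: "trace (\<Sum>x\<leftarrow>xs. B x :: 'n::finite cmat) = (\<Sum>x\<leftarrow>xs. trace (B x))"
  by (induct xs) (auto simp: trace_add trace_0[simplified])

lemma trace_cycle3: "trace ((A::'n::finite cmat) ** B ** C) = trace (C ** A ** B)"
  using trace_mul_sym[of "A ** B" C] by (simp add: matrix_mul_assoc)

definition clinear :: "('n::finite cmat \<Rightarrow> 'm::finite cmat) \<Rightarrow> bool" where
  "clinear f \<longleftrightarrow> (\<forall>A B. f (A + B) = f A + f B) \<and> (\<forall>c A. f (cscale c A) = cscale c (f A))"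

lemma clinearI:
  "(\<And>A B. f (A + B) = f A + f B) \<Longrightarrow> (\<And>c A. f (cscale c A) = cscale c (f A)) \<Longrightarrow> clinear f"
  by (simp add: clinear_def)

lemma clinear_add: "clinear f \<Longrightarrow> f (A + B) = f A + f B"
  and clinear_cscale: "clinear f \<Longrightarrow> f (cscale c A) = cscale c (f A)"
  by (simp_all add: clinear_def)

lemma clinear_diff: "clinear f \<Longrightarrow> f (A - B) = f A - f B"
  using clinear_add[of f A "cscale (-1) B"] clinear_cscale[of f "-1" B]
  by (simp add: cscale_minus_one)

lemma clinear_zero: "clinear f \<Longrightarrow> f 0 = 0"
  using clinear_diff[of f 0 0] by simp

lemma clinear_sum:
  assumes "clinear f" and "finite I"
  shows "f (\<Sum>i\<in>I. A i) = (\<Sum>i\<in>I. f (A i))"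
  using assms(2) by (induct I rule: finite_induct)
    (simp_all add: clinear_zero[OF assms(1)] clinear_add[OF assms(1)])

lemma clinear_linear: "clinear f \<Longrightarrow> linear f"
  by (rule linearI) (simp_all add: clinear_add scaleR_cscale clinear_cscale)

lemma clinear_cscale_map: "clinear (cscale c)"
  by (rule clinearI) (simp_all add: cscale_add cscale_cscale mult.commute)

lemma clinear_sandwich: "clinear (\<lambda>X. (A::'n::finite cmat) ** X ** B)"
  by (rule clinearI)
     (simp_all add: matrix_add_ldistrib matrix_add_rdistrib cscale_mult_left cscale_mult_right)

lemma clinear_compose: "clinear f \<Longrightarrow> clinear g \<Longrightarrow> clinear (\<lambda>X. f (g X))"
  by (simp add: clinear_def)

lemma clinear_funpow:
  fixes f :: "'n::finite cmat \<Rightarrow> 'n cmat"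
  assumes "clinear f" shows "clinear (f ^^ n)"
proof (induct n)
  case 0
  show ?case by (simp add: clinear_def)
next
  case (Suc n)
  then show ?case using clinear_compose[OF assms Suc] by simp
qed

lemma clinear_minus: "clinear f \<Longrightarrow> clinear g \<Longrightarrow> clinear (\<lambda>X. f X - g X)"
  by (simp add: clinear_def cscale_def vec_eq_iff algebra_simps)

lemma tendsto_cscale_zero: "(f \<longlongrightarrow> 0) F \<Longrightarrow> ((\<lambda>x. cscale c (f x)) \<longlongrightarrow> 0) F"
  using clinear_linear[OF clinear_cscale_map] unfolding linear_conv_bounded_linear
  by (rule bounded_linear.tendsto_zero)

section \<open>Rank-one operators\<close>

definition outer :: "complex^'n::finite \<Rightarrow> complex^'n \<Rightarrow> 'n cmat" where
  "outer u w = (\<chi> i j. u$i * cnj (w$j))"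

lemma outer_mult: "A ** outer u w ** B = outer (A *v u) (madj B *v w)"
  by (simp add: outer_def madj_def matrix_matrix_mult_def matrix_vector_mult_def vec_eq_iff
      sum_distrib_left sum_distrib_right algebra_simps)

lemma outer_mulv: "outer u w *v x = cinner w x *s u"
  by (simp add: outer_def cinner_def matrix_vector_mult_def vec_eq_iff sum_distrib_left
      algebra_simps)

lemma cinner_scale: "cinner v (c *s u) = c * cinner v u"
  by (simp add: cinner_def sum_distrib_left algebra_simps)

lemma cinner_swap: "cinner v u = cnj (cinner u v)"
  by (simp add: cinner_def mult.commute)

lemma psd_outer: "psd (outer u u)"
proof -
  have "cinner v (outer u u *v v) = cinner u v * cnj (cinner u v)" for v
    by (simp add: outer_mulv cinner_scale cinner_swap[of v u])
  then show ?thesis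
    by (simp add: psd_def hermitian_def madj_def outer_def vec_eq_iff complex_mult_cnj)
qed

lemma psd_cscale: "r \<ge> 0 \<Longrightarrow> psd A \<Longrightarrow> psd (cscale (complex_of_real r) A)"
  by (simp add: psd_def hermitian_def madj_cscale cscale_mulv cinner_scale)

lemma trace_outer: "trace (outer u u) = complex_of_real (\<Sum>i\<in>UNIV. (cmod (u$i))\<^sup>2)"
  by (simp add: trace_def outer_def of_real_sum complex_norm_square
      del: complex_mult_cnj of_real_power)

lemma trace_outer_eq_0: "trace (outer u u) = 0 \<longleftrightarrow> u = 0"
  unfolding trace_outer of_real_eq_0_iff by (simp add: sum_nonneg_eq_0_iff vec_eq_iff)

lemma sum_list_outer_eq_0:
  assumes "(\<Sum>x\<leftarrow>xs. outer (v x) (v x)) = 0" and "y \<in> set xs"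
  shows "v y = 0"
proof -
  have of_real_sum_list: "(\<Sum>x\<leftarrow>ys. complex_of_real (f x)) = complex_of_real (\<Sum>x\<leftarrow>ys. f x)"
    for ys and f :: "'b \<Rightarrow> real"
    by (induct ys) auto
  have "(\<Sum>x\<leftarrow>xs. (\<Sum>i\<in>UNIV. (cmod (v x $ i))\<^sup>2)) = 0"
    using arg_cong[OF assms(1), of trace]
    unfolding trace_sum_list trace_outer of_real_sum_list
    by (simp add: trace_0[simplified] del: of_real_sum)
  then have "(\<Sum>i\<in>UNIV. (cmod (v y $ i))\<^sup>2) = 0"
    using assms(2) by (subst (asm) sum_list_nonneg_eq_0_iff) (auto intro: sum_nonneg)
  then show ?thesis
    using trace_outer_eq_0[of "v y"] by (simp add: trace_outer)
qed

lemma polarization: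
  "outer u w = cscale (1/4) (\<Sum>k<4. cscale (\<i>^k) (outer (u + (\<i>^k) *s w) (u + (\<i>^k) *s w)))"
  by (simp add: vec_eq_iff cscale_def outer_def eval_nat_numeral lessThan_Suc algebra_simps)

lemma column_decomp: "(X::'n::finite cmat) = (\<Sum>j\<in>UNIV. outer (column j X) (axis j 1))"
  by (simp add: vec_eq_iff outer_def column_def axis_def if_distrib if_distribR cong: if_cong)

lemma outer_density:
  assumes "v \<noteq> 0"
  obtains \<rho> t where "density \<rho>" and "outer v v = cscale (complex_of_real t) \<rho>"
proof -
  define t where "t = (\<Sum>i\<in>UNIV. (cmod (v$i))\<^sup>2)"
  have tr: "trace (outer v v) = complex_of_real t"
    unfolding t_def by (rule trace_outer)
  have "t \<noteq> 0"
    using assms trace_outer_eq_0[of v] tr by (metis of_real_0)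
  moreover have "t \<ge> 0"
    by (simp add: t_def sum_nonneg)
  ultimately have "t > 0" by simp
  define \<rho> where "\<rho> = cscale (complex_of_real (1/t)) (outer v v)"
  have "psd \<rho>"
    unfolding \<rho>_def using \<open>t > 0\<close> by (intro psd_cscale psd_outer) simp
  then have "density \<rho>"
    using \<open>t > 0\<close> by (simp add: density_def \<rho>_def trace_cscale tr)
  moreover have "outer v v = cscale (complex_of_real t) \<rho>"
    using \<open>t > 0\<close> by (simp add: \<rho>_def cscale_cscale cscale_one flip: of_real_mult)
  ultimately show ?thesis by (rule that)
qed

text \<open>Hence a sequence of complex-linear maps tending to 0 on all density operators tends
  to 0 on every matrix.  This extends the GAS condition from states to all operators.\<close>
lemma tendsto_zero_from_densities:
  assumes lin: "\<And>n. clinear (L n)"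
    and dens: "\<And>\<rho>. density \<rho> \<Longrightarrow> (\<lambda>n. L n \<rho>) \<longlonglongrightarrow> 0"
  shows "(\<lambda>n. L n X) \<longlonglongrightarrow> 0"
proof -
  have positive: "(\<lambda>n. L n (outer v v)) \<longlonglongrightarrow> 0" for v
  proof (cases "v = 0")
    case True
    then have "outer v v = 0" by (simp add: outer_def vec_eq_iff)
    then show ?thesis by (simp add: clinear_zero[OF lin])
  next
    case False
    then obtain \<rho> t where "density \<rho>" and "outer v v = cscale (complex_of_real t) \<rho>"
      by (rule outer_density)
    then show ?thesis
      using dens by (simp add: clinear_cscale[OF lin] tendsto_cscale_zero)
  qed
  have rank_one: "(\<lambda>n. L n (outer u w)) \<longlonglongrightarrow> 0" for u w
    by (subst polarization, simp only: clinear_cscale[OF lin] clinear_sum[OF lin finite_lessThan])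
       (intro tendsto_cscale_zero tendsto_null_sum positive)
  show ?thesis
    by (subst column_decomp[of X], simp only: clinear_sum[OF lin finite])
       (intro tendsto_null_sum rank_one)
qed

lemma linear_inj_on_subspace_bij:
  fixes f :: "'a::euclidean_space \<Rightarrow> 'a"
  assumes "linear f" and "subspace H" and "f ` H \<subseteq> H" and "inj_on f H"
  shows "bij_betw f H H"
proof -
  have "dim (f ` H) = dim H"
    using assms by (intro dim_image_eq) (simp_all add: span_eq_iff[THEN iffD2])
  then have "f ` H = H"
    using assms by (intro subspace_dim_equal linear_subspace_image) simp_all
  then show ?thesis
    using assms(4) by (simp add: bij_betw_def)
qed

lemma telescoping_limit:
  fixes a g :: "nat \<Rightarrow> 'a::real_normed_vector"
  assumes step: "\<And>n. a (Suc n) + g (Suc n) = a n + g n" and g: "g \<longlonglongrightarrow> 0"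
  shows "a \<longlonglongrightarrow> a 0 + g 0"
proof -
  define c where "c = a 0 + g 0"
  have "a n + g n = c" for n
    by (induct n) (simp_all add: c_def step)
  then have "a = (\<lambda>n. c - g n)"
    by (simp add: fun_eq_iff eq_diff_eq)
  moreover have "(\<lambda>n. c - g n) \<longlonglongrightarrow> c - 0"
    by (intro tendsto_diff tendsto_const g)
  ultimately show ?thesis
    unfolding c_def[symmetric] by simp
qed

section \<open>Channels in Kraus form\<close>

locale kraus =
  fixes T :: "'n::finite cmat \<Rightarrow> 'n cmat" and Ms :: "'n cmat list"
  assumes T_eq: "T = (\<lambda>\<rho>. \<Sum>M\<leftarrow>Ms. M ** \<rho> ** madj M)"
    and complete: "(\<Sum>M\<leftarrow>Ms. madj M ** M) = mat 1"
begin

lemma clinear_T: "clinear T"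
  unfolding T_eq
  by (rule clinearI)
     (simp_all add: matrix_add_ldistrib matrix_add_rdistrib sum_list_addf cscale_mult_left
      cscale_mult_right cscale_sum_list)

lemma T_madj: "madj (T A) = T (madj A)"
  unfolding T_eq by (simp add: madj_sum_list madj_mult madj_madj matrix_mul_assoc)

definition dual :: "'n cmat \<Rightarrow> 'n cmat" where
  "dual Z = (\<Sum>M\<leftarrow>Ms. madj M ** Z ** M)"

lemma trace_T_dual: "trace (Z ** T Y) = trace (dual Z ** Y)"
proof -
  have "trace (Z ** (M ** Y ** madj M)) = trace (madj M ** Z ** M ** Y)" for M
    using trace_cycle3[of "Z ** M" Y "madj M"] by (simp add: matrix_mul_assoc)
  then show ?thesis
    unfolding T_eq dual_def matrix_sum_list_ldistrib matrix_sum_list_rdistrib trace_sum_list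
    by simp
qed

text \<open>If the range of the orthogonal projection P is invariant, then (1 - P) M P = 0 for
  every Kraus operator M: otherwise some pure state in ran P would leak out of ran P.\<close>
lemma invariant_kraus:
  assumes P: "orth_proj P" and inv: "invariant T P" and M: "M \<in> set Ms"
  shows "M ** P = P ** M ** P"
proof -
  define Q where "Q = mat 1 - P"
  have PP: "P ** P = P" and aP: "madj P = P"
    using P by (auto simp: orth_proj_def)
  have QP: "Q ** P = 0" and PQ: "P ** Q = 0" and aQ: "madj Q = Q"
    by (simp_all add: Q_def matrix_diff_rdistrib matrix_diff_ldistrib PP madj_diff madj_one aP)
  have "(Q ** M ** P) *v v = 0" for v
  proof -
    define u where "u = P *v v"
    have "supported_in P (outer u u)"
      by (simp add: supported_in_def outer_mult aP u_def matrix_vector_mul_assoc PP)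
    then have "P ** T (outer u u) ** P = T (outer u u)"
      using inv psd_outer by (auto simp: invariant_def supported_in_def)
    then have "Q ** T (outer u u) ** Q = (Q ** P) ** T (outer u u) ** (P ** Q)"
      by (metis matrix_mul_assoc)
    then have "Q ** T (outer u u) ** Q = 0"
      by (simp add: QP PQ)
    moreover have "Q ** T (outer u u) ** Q = (\<Sum>N\<leftarrow>Ms. outer ((Q ** N) *v u) ((Q ** N) *v u))"
    proof -
      have "Q ** (N ** outer u u ** madj N) ** Q = (Q ** N) ** outer u u ** (madj N ** Q)" for N
        by (simp add: matrix_mul_assoc)
      then show ?thesis
        unfolding T_eq matrix_sum_list_ldistrib matrix_sum_list_rdistrib
        by (simp add: outer_mult madj_mult madj_madj aQ)
    qed
    ultimately have "(Q ** M) *v u = 0"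
      using M by (intro sum_list_outer_eq_0[where xs=Ms]) simp_all
    then show ?thesis by (simp add: u_def matrix_vector_mul_assoc)
  qed
  then have "Q ** M ** P = 0" by (subst matrix_eq) simp
  then show ?thesis by (simp add: Q_def matrix_diff_rdistrib matrix_mul_assoc)
qed

lemma invariant_decomposition_block:
  fixes P :: "nat \<Rightarrow> 'n cmat" and K i :: nat
  assumes oP: "\<forall>j<K. orth_proj (P j)"
    and orth: "\<forall>j<K. \<forall>k<K. j \<noteq> k \<longrightarrow> P j ** P k = 0"
    and sumP: "(\<Sum>j<K. P j) = PS"
    and invP: "\<forall>j<K. invariant T (P j)"
    and i: "i < K" and M: "M \<in> set Ms"
  shows "P i ** M ** PS = M ** P i"
proof -
  have proj: "P j ** P j = P j" and inv: "M ** P j = P j ** M ** P j" if "j < K" for j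
    using oP invP invariant_kraus[of "P j" M] M that by (auto simp: orth_proj_def)
  have "P i ** M ** P j = (if j = i then M ** P i else 0)" if j: "j < K" for j
  proof -
    have "P i ** M ** P j = (P i ** P j) ** M ** P j"
      by (metis inv[OF j] matrix_mul_assoc)
    then show ?thesis
      using orth i j by (cases "j = i") (simp_all add: proj[OF i] inv[OF i, symmetric])
  qed
  then have "(\<Sum>j<K. P i ** M ** P j) = (\<Sum>j<K. if j = i then M ** P i else 0)"
    by (intro sum.cong) simp_all
  moreover have "P i ** M ** PS = (\<Sum>j<K. P i ** M ** P j)"
    by (simp add: sumP[symmetric] matrix_sum_ldistrib)
  ultimately show ?thesis
    using i by simp
qed

end

lemma orthogonal_decomposition_below:
  fixes P :: "nat \<Rightarrow> 'n::finite cmat"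
  assumes oP: "\<forall>j<K. orth_proj (P j)" and orth: "\<forall>j<K. \<forall>k<K. j \<noteq> k \<longrightarrow> P j ** P k = 0"
    and i: "i < K"
  shows "P i ** (\<Sum>j<K. P j) = P i"
proof -
  have "(\<Sum>j<K. P i ** P j) = (\<Sum>j<K. if j = i then P i else 0)"
    using oP orth i by (intro sum.cong) (auto simp: orth_proj_def)
  then show ?thesis
    using i by (simp add: matrix_sum_ldistrib)
qed

section \<open>A GAS subspace and the transient part\<close>

locale gas_split = kraus T Ms for T :: "'n::finite cmat \<Rightarrow> 'n cmat" and Ms +
  fixes PS PR :: "'n cmat"
  assumes oPS: "orth_proj PS" and oPR: "orth_proj PR" and PS_plus_PR: "PS + PR = mat 1"
    and gas: "GAS T PS"
begin

abbreviation R where "R \<equiv> T_R T PR"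

lemma PS_idem: "PS ** PS = PS" and PS_adj: "madj PS = PS"
  and PR_idem: "PR ** PR = PR" and PR_adj: "madj PR = PR"
  using oPS oPR by (auto simp: orth_proj_def)

lemma PR_idem_right: "A ** PR ** PR = A ** PR"
  by (simp add: PR_idem flip: matrix_mul_assoc)

lemma PR_complement: "PR = mat 1 - PS"
  using PS_plus_PR by (simp add: eq_diff_eq add.commute)

lemma PR_PS: "PR ** PS = 0"
  by (simp add: PR_complement matrix_diff_rdistrib PS_idem)

text \<open>Since H_S is invariant, nothing flows from H_S back into H_R: \<Pi>_R M = \<Pi>_R M \<Pi>_R.\<close>
lemma PR_kraus:
  assumes M: "M \<in> set Ms"
  shows "PR ** M = PR ** M ** PR"
proof -
  have "M ** PS = PS ** M ** PS"
    using invariant_kraus[OF oPS _ M] gas by (simp add: GAS_def)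
  then have "PR ** M ** PS = (PR ** PS) ** M ** PS"
    by (metis matrix_mul_assoc)
  then have "PR ** M ** PS = 0" by (simp add: PR_PS)
  then show ?thesis
    by (simp add: PR_complement matrix_diff_ldistrib)
qed

lemma compress_T: "PR ** T X ** PR = PR ** T (PR ** X ** PR) ** PR"
proof -
  have "PR ** (M ** X ** madj M) ** PR = PR ** (M ** (PR ** X ** PR) ** madj M) ** PR"
    if M: "M \<in> set Ms" for M
  proof -
    have "PR ** (M ** X ** madj M) ** PR = (PR ** M) ** X ** madj (PR ** M)"
      by (simp add: madj_mult PR_adj matrix_mul_assoc)
    also have "\<dots> = (PR ** M ** PR) ** X ** madj (PR ** M ** PR)"
      using PR_kraus[OF M] by simp
    also have "\<dots> = PR ** (M ** (PR ** X ** PR) ** madj M) ** PR"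
      by (simp add: madj_mult PR_adj matrix_mul_assoc)
    finally show ?thesis .
  qed
  then show ?thesis
    unfolding T_eq matrix_sum_list_ldistrib matrix_sum_list_rdistrib
    by (metis (no_types, lifting) map_eq_conv)
qed

lemma T_R_power: "(R ^^ n) (PR ** X ** PR) = PR ** (T ^^ n) X ** PR"
  by (induct n) (simp_all add: T_R_def compress_T[of "(T ^^ _) X"])

lemma clinear_R: "clinear R"
  unfolding T_R_def by (intro clinear_compose[OF clinear_sandwich clinear_T])

lemma GAS_all: "(\<lambda>n. (T ^^ n) X - PS ** (T ^^ n) X ** PS) \<longlonglongrightarrow> 0"
proof (rule tendsto_zero_from_densities[where L="\<lambda>n X. (T ^^ n) X - PS ** (T ^^ n) X ** PS"])
  show "clinear (\<lambda>X. (T ^^ n) X - PS ** (T ^^ n) X ** PS)" for n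
    by (intro clinear_minus clinear_funpow clinear_T clinear_compose[OF clinear_sandwich])
  show "(\<lambda>n. (T ^^ n) \<rho> - PS ** (T ^^ n) \<rho> ** PS) \<longlonglongrightarrow> 0" if "density \<rho>" for \<rho>
    using gas that by (simp add: GAS_def tendsto_norm_zero_iff)
qed

lemma T_R_power_tendsto_zero:
  assumes B: "PR ** B ** PR = B"
  shows "(\<lambda>n. (R ^^ n) B) \<longlonglongrightarrow> 0"
proof -
  have "(\<lambda>n. PR ** ((T ^^ n) B - PS ** (T ^^ n) B ** PS) ** PR) \<longlonglongrightarrow> 0"
    using clinear_linear[OF clinear_sandwich[of PR PR]] GAS_all[of B]
    unfolding linear_conv_bounded_linear by (rule bounded_linear.tendsto_zero)
  moreover have "PR ** ((T ^^ n) B - PS ** (T ^^ n) B ** PS) ** PR = (R ^^ n) B" for n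
    using T_R_power[of n B] B
    by (simp add: matrix_diff_ldistrib matrix_diff_rdistrib matrix_mul_assoc PR_PS)
  ultimately show ?thesis by simp
qed

lemma subspace_herm_on: "subspace (herm_on PR)"
  unfolding subspace_def herm_on_def hermitian_def
  by (auto simp: madj_zero madj_add matrix_add_ldistrib matrix_add_rdistrib scaleR_cscale
      madj_cscale cscale_mult_left cscale_mult_right)

lemma T_R_herm_on: "A \<in> herm_on PR \<Longrightarrow> R A \<in> herm_on PR"
  by (simp add: herm_on_def hermitian_def T_R_def madj_mult PR_adj T_madj matrix_mul_assoc
      PR_idem PR_idem_right)

text \<open>Part one of the theorem: id - T_R is invertible on the Hermitian operators on H_R,
  because a fixed point of T_R there would have to equal its own limit 0.\<close>
theorem id_minus_T_R_bij: "bij_betw (\<lambda>A. A - R A) (herm_on PR) (herm_on PR)"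
proof (rule linear_inj_on_subspace_bij)
  show "linear (\<lambda>A. A - R A)"
    by (intro clinear_linear clinear_minus clinear_R) (simp add: clinear_def)
  show "subspace (herm_on PR)" by (rule subspace_herm_on)
  show "(\<lambda>A. A - R A) ` herm_on PR \<subseteq> herm_on PR"
    using T_R_herm_on subspace_herm_on by (auto intro: subspace_diff)
  show "inj_on (\<lambda>A. A - R A) (herm_on PR)"
  proof (rule inj_onI)
    fix A B assume "A \<in> herm_on PR" "B \<in> herm_on PR" and eq: "A - R A = B - R B"
    then have C: "A - B \<in> herm_on PR"
      using subspace_herm_on by (simp add: subspace_diff)
    have "R (A - B) = A - B"
      using eq by (simp add: clinear_diff[OF clinear_R] algebra_simps)
    then have "(R ^^ n) (A - B) = A - B" for n
      by (induct n) simp_all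
    moreover have "(\<lambda>n. (R ^^ n) (A - B)) \<longlonglongrightarrow> 0"
      using C by (intro T_R_power_tendsto_zero) (simp add: herm_on_def)
    ultimately show "A = B" by (simp add: LIMSEQ_const_iff)
  qed
qed

end

section \<open>Absorption into a single invariant block\<close>

text \<open>An invariant block Q \<le> PS that, within H_S, is fed only by itself.\<close>
locale gas_block = gas_split T Ms PS PR for T :: "'n::finite cmat \<Rightarrow> 'n cmat" and Ms PS PR +
  fixes Q :: "'n cmat"
  assumes oQ: "orth_proj Q" and Q_PS: "Q ** PS = Q"
    and block: "\<And>M. M \<in> set Ms \<Longrightarrow> Q ** M ** PS = M ** Q"
begin

lemma Q_idem: "Q ** Q = Q" and Q_adj: "madj Q = Q"
  using oQ by (auto simp: orth_proj_def)

lemma Q_idem_right: "A ** Q ** Q = A ** Q"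
  by (simp add: Q_idem flip: matrix_mul_assoc)

lemma PS_Q: "PS ** Q = Q"
  using arg_cong[OF Q_PS, of madj] by (simp add: madj_mult Q_adj PS_adj)

lemma PR_Q: "PR ** Q = 0"
proof -
  have "PR ** Q = (PR ** PS) ** Q"
    by (simp add: PS_Q flip: matrix_mul_assoc)
  then show ?thesis by (simp add: PR_PS)
qed

text \<open>Dual of the block projection: its H_S corner is Q and its off-diagonal corners vanish.
  This expresses that the probability in block Q is conserved.\<close>
lemma dual_block: "dual Q = Q + PR ** dual Q ** PR"
proof -
  have SS: "PS ** dual Q ** PS = Q"
  proof -
    have "PS ** (madj M ** Q ** M) ** PS = Q ** (madj M ** M) ** Q" if M: "M \<in> set Ms" for M
    proof -
      have "PS ** (madj M ** Q ** M) ** PS = madj (Q ** M ** PS) ** (Q ** M ** PS)"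
        by (simp add: madj_mult PS_adj Q_adj matrix_mul_assoc Q_idem_right)
      also have "\<dots> = Q ** (madj M ** M) ** Q"
        by (simp add: block[OF M] madj_mult Q_adj matrix_mul_assoc)
      finally show ?thesis .
    qed
    then have "PS ** dual Q ** PS = (\<Sum>M\<leftarrow>Ms. Q ** (madj M ** M) ** Q)"
      unfolding dual_def matrix_sum_list_ldistrib matrix_sum_list_rdistrib
      by (intro arg_cong[where f=sum_list] map_cong) auto
    also have "\<dots> = Q ** (\<Sum>M\<leftarrow>Ms. madj M ** M) ** Q"
      by (simp add: matrix_sum_list_ldistrib matrix_sum_list_rdistrib)
    finally show ?thesis
      by (simp add: complete Q_idem)
  qed
  have RS: "PR ** dual Q ** PS = 0"
  proof -
    have "PR ** (madj M ** Q ** M) ** PS = PR ** (madj M ** M) ** Q" if M: "M \<in> set Ms" for M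
      using block[OF M] by (metis matrix_mul_assoc)
    then have "PR ** dual Q ** PS = (\<Sum>M\<leftarrow>Ms. PR ** (madj M ** M) ** Q)"
      unfolding dual_def matrix_sum_list_ldistrib matrix_sum_list_rdistrib
      by (intro arg_cong[where f=sum_list] map_cong) auto
    also have "\<dots> = PR ** (\<Sum>M\<leftarrow>Ms. madj M ** M) ** Q"
      by (simp add: matrix_sum_list_ldistrib matrix_sum_list_rdistrib)
    finally show ?thesis
      by (simp add: complete PR_Q)
  qed
  have "madj (dual Q) = dual Q"
    by (simp add: dual_def madj_sum_list madj_mult madj_madj Q_adj matrix_mul_assoc)
  then have SR: "PS ** dual Q ** PR = 0"
    using arg_cong[OF RS, of madj] by (simp add: madj_mult madj_zero PS_adj PR_adj matrix_mul_assoc)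
  have "dual Q = (PS + PR) ** dual Q ** (PS + PR)"
    by (simp add: PS_plus_PR)
  also have "\<dots> = PS ** dual Q ** PS + PS ** dual Q ** PR
      + (PR ** dual Q ** PS + PR ** dual Q ** PR)"
    by (simp add: matrix_add_ldistrib matrix_add_rdistrib add.assoc)
  finally show ?thesis by (simp add: SS RS SR)
qed

lemma trace_block_step:
  "trace (Q ** T Y) = trace (Q ** Y) + trace (Q ** T (PR ** Y ** PR))"
proof -
  have "trace (Q ** T Y) = trace ((Q + PR ** dual Q ** PR) ** Y)"
    using arg_cong[OF dual_block, of "\<lambda>G. trace (G ** Y)"] by (simp add: trace_T_dual)
  also have "\<dots> = trace (Q ** Y) + trace (PR ** (dual Q ** PR ** Y))"
    by (simp add: matrix_add_rdistrib trace_add matrix_mul_assoc)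
  also have "trace (PR ** (dual Q ** PR ** Y)) = trace (dual Q ** PR ** Y ** PR)"
    by (rule trace_mul_sym)
  also have "\<dots> = trace (Q ** T (PR ** Y ** PR))"
    by (simp add: trace_T_dual matrix_mul_assoc)
  finally show ?thesis .
qed

lemma trace_block_compress: "trace (Q ** (PS ** Z ** PS)) = trace (Q ** Z)"
proof -
  have "trace (Q ** (PS ** Z ** PS)) = trace (PS ** (Q ** PS ** Z))"
    using trace_mul_sym[of "Q ** PS ** Z" PS] by (simp add: matrix_mul_assoc)
  also have "\<dots> = trace (Q ** Z)"
    by (simp add: matrix_mul_assoc Q_PS PS_Q)
  finally show ?thesis .
qed

text \<open>Part two of the theorem, for the block Q: telescope the one-step identity along the
  orbit, with B the preimage of \<rho>_R under id - T_R, and use T_R^n B \<rightarrow> 0.\<close>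
theorem block_absorption:
  assumes d: "density \<rho>"
  shows "(\<lambda>n. trace (Q ** (T ^^ n) \<rho>)) \<longlonglongrightarrow>
           trace (Q ** (PS ** \<rho> ** PS))
           + trace (Q ** T_SR T PS (inv_into (herm_on PR) (\<lambda>A. A - R A) (PR ** \<rho> ** PR)))"
proof -
  define h where "h X = trace (Q ** T X)" for X
  define B where "B = inv_into (herm_on PR) (\<lambda>A. A - R A) (PR ** \<rho> ** PR)"
  have "PR ** \<rho> ** PR \<in> herm_on PR"
    using d by (simp add: density_def psd_def hermitian_def herm_on_def madj_mult PR_adj
        matrix_mul_assoc PR_idem PR_idem_right)
  moreover have "(\<lambda>A. A - R A) ` herm_on PR = herm_on PR"
    using id_minus_T_R_bij by (simp add: bij_betw_def)
  ultimately have B: "B \<in> herm_on PR" and fB: "B - R B = PR ** \<rho> ** PR"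
    unfolding B_def by (metis inv_into_into, metis f_inv_into_f)
  have "linear h"
    unfolding h_def
    by (rule linearI) (simp_all add: clinear_add[OF clinear_T] clinear_cscale[OF clinear_T]
        matrix_add_ldistrib trace_add scaleR_cscale cscale_mult_right trace_cscale
        scaleR_conv_of_real)
  then have "(\<lambda>n. h ((R ^^ n) B)) \<longlonglongrightarrow> 0"
    using T_R_power_tendsto_zero[of B] B unfolding linear_conv_bounded_linear
    by (auto simp: herm_on_def intro: bounded_linear.tendsto_zero)
  moreover have "trace (Q ** (T ^^ Suc n) \<rho>) + h ((R ^^ Suc n) B)
      = trace (Q ** (T ^^ n) \<rho>) + h ((R ^^ n) B)" for n
  proof -
    have "PR ** (T ^^ n) \<rho> ** PR = (R ^^ n) B - R ((R ^^ n) B)"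
      using T_R_power[of n \<rho>]
      by (simp add: fB[symmetric] clinear_diff[OF clinear_funpow[OF clinear_R]] funpow_swap1)
    then show ?thesis
      using trace_block_step[of "(T ^^ n) \<rho>"]
      by (simp add: h_def clinear_diff[OF clinear_T] matrix_diff_ldistrib trace_sub)
  qed
  ultimately have "(\<lambda>n. trace (Q ** (T ^^ n) \<rho>)) \<longlonglongrightarrow> trace (Q ** \<rho>) + h B"
    using telescoping_limit[where a="\<lambda>n. trace (Q ** (T ^^ n) \<rho>)" and g="\<lambda>n. h ((R ^^ n) B)"]
    by simp
  then show ?thesis
    by (simp add: B_def h_def T_SR_def trace_block_compress)
qed

end

theorem proposition7:
  fixes T :: "'n::finite cmat \<Rightarrow> 'n cmat"
    and PS PR :: "'n cmat" and P :: "nat \<Rightarrow> 'n cmat" and K :: nat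
  assumes "cptp T"
    and "orth_proj PS" and "orth_proj PR" and "PS + PR = mat 1"
    and "K \<ge> 1"
    and "\<forall>i<K. orth_proj (P i)"
    and "\<forall>i<K. \<forall>j<K. i \<noteq> j \<longrightarrow> P i ** P j = 0"
    and "(\<Sum>i<K. P i) = PS"
    and "\<forall>i<K. invariant T (P i)"
    and "GAS T PS"
  shows "bij_betw (\<lambda>A. A - T_R T PR A) (herm_on PR) (herm_on PR)
    \<and> (\<forall>\<rho> i. density \<rho> \<and> i < K \<longrightarrow>
         (\<lambda>n. trace (P i ** (T^^n) \<rho>)) \<longlonglongrightarrow>
           trace (P i ** (PS ** \<rho> ** PS))
           + trace (P i ** T_SR T PS
               (inv_into (herm_on PR) (\<lambda>A. A - T_R T PR A) (PR ** \<rho> ** PR))))"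
proof -
  obtain Ms where "kraus T Ms"
    using assms(1) unfolding cptp_def kraus_def by blast
  then interpret gas_split T Ms PS PR
    using assms(2-4,10) by (simp add: gas_split_def gas_split_axioms_def)
  have "(\<lambda>n. trace (P i ** (T^^n) \<rho>)) \<longlonglongrightarrow> trace (P i ** (PS ** \<rho> ** PS))
      + trace (P i ** T_SR T PS (inv_into (herm_on PR) (\<lambda>A. A - R A) (PR ** \<rho> ** PR)))"
    if "density \<rho>" and i: "i < K" for \<rho> i
  proof -
    interpret gas_block T Ms PS PR "P i"
    proof
      show "orth_proj (P i)" and "P i ** PS = P i"
        using assms(6-8) i orthogonal_decomposition_below[of K P i] by auto
      show "P i ** M ** PS = M ** P i" if "M \<in> set Ms" for M
        using invariant_decomposition_block[OF assms(6-9) i that] .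
    qed
    show ?thesis using block_absorption[OF \<open>density \<rho>\<close>] .
  qed
  then show ?thesis using id_minus_T_R_bij by blast
qed

end
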